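(* Let $N<M$ be positive integers and $p=1/M$. Let $k,\lambda$ be non-negative integers with $k+\lambda+1<M$. Then $$P_{\lambda}(A_{N,p}=k)=(\lambda+1)\binom{N}{k}p^k\bigl(1-(k+1+\lambda)p\bigr)^{N-k}(k+1+\lambda)^{k-1},$$ and $$P\bigl(A_{N,p}(T_\lambda(\omega))=k,\ Y_M(\omega)=0\bigr)=\lambda\binom{N}{k}p^k\bigl(1-(k+1+\lambda)p\bigr)^{N-k}(k+\lambda)^{k-1}.$$
   Context: A configuration $\omega$ of the $(N,p)$ BB space is an assignment to each neuron $j\in\{1,\dots,N\}$ of an energy level $E_j(\omega)\in\{1,\dots,M\}$ (equivalently a $0/1$ matrix $(a_{i,j})_{i\le M,j\le N}$ with exactly one $1$ in each column, $a_{i,j}=1$ iff $E_j=i$). Let $Y_i(\omega)=\#\{j: E_j(\omega)=i\}$. The avalanche size is $A_{N,p}(\omega)=\inf\{i\ge 0:\ \sum_{j=M-i}^{M}Y_j(\omega)\le i\}$. The uniform measure $P$ makes the levels $E_1,\dots,E_N$ i.i.d. uniform on $\{1,\dots,M\}$. For an integer $\lambda\ge0$, the map $T_\lambda$ on configurations is defined by: if $E_j(\omega)\ge M-\lambda$ then $E_j(T_\lambda(\omega))=M$; if $E_j(\omega)<M-\lambda$ then $E_j(T_\lambda(\omega))=E_j(\omega)+\lambda$. $P_\lambda$ is the pushforward of $P$ under $T_\lambda$. *)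

theory Defs
  imports "HOL-Probability.Probability"
begin

text \<open>Configurations of the (N,p) BB space, p = 1/M: energy level E j in {1..M}
  for each neuron j in {1..N} (extensional functions, undefined outside {1..N}).\<close>
definition configs :: "nat \<Rightarrow> nat \<Rightarrow> (nat \<Rightarrow> nat) set" where
  "configs N M = PiE {1..N} (\<lambda>_. {1..M})"

definition Ycount :: "nat \<Rightarrow> (nat \<Rightarrow> nat) \<Rightarrow> nat \<Rightarrow> nat" where
  "Ycount N E i = card {j \<in> {1..N}. E j = i}"

definition avalanche :: "nat \<Rightarrow> nat \<Rightarrow> (nat \<Rightarrow> nat) \<Rightarrow> nat" where
  "avalanche N M E = (LEAST i. (\<Sum>j\<in>{M - i..M}. Ycount N E j) \<le> i)"

definition Tmap :: "nat \<Rightarrow> nat \<Rightarrow> nat \<Rightarrow> (nat \<Rightarrow> nat) \<Rightarrow> (nat \<Rightarrow> nat)" where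
  "Tmap N M l E = restrict (\<lambda>j. if int (E j) \<ge> int M - int l then M else E j + l) {1..N}"

definition Punif :: "nat \<Rightarrow> nat \<Rightarrow> (nat \<Rightarrow> nat) pmf" where
  "Punif N M = pmf_of_set (configs N M)"

definition Plam :: "nat \<Rightarrow> nat \<Rightarrow> nat \<Rightarrow> (nat \<Rightarrow> nat) pmf" where
  "Plam N M l = map_pmf (Tmap N M l) (Punif N M)"

end

theory Submission
  imports Defs
begin

(* Measure neuron j by its depth d j = M - E j below the top level. T_l lowers every depth by l
  (truncating at 0), so the avalanche size of T_l(E) is the least i with #{j. d j <= l + i} <= i.
  It equals k exactly when the k neurons of depth at most l + k form an l-shifted parking function,
  i.e. #{j. d j <= l + i} > i for all i < k, while each of the other N - k neurons has one of the
  M - l - k - 1 larger depths. Conditioning on the cars that prefer one of the first a + 1 spots,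
  together with sum_m m C(n,m) x^m y^(n-m) = n x (x + y)^(n-1), shows that there are
  (a + 1)(a + k + 1)^(k-1) a-shifted parking functions of length k; dividing by M^N gives the first
  formula. The event Y_M = 0 says that all depths are positive: lowering the depths and l by one
  reduces the second formula to the same count with M - 1 levels and shift l - 1. *)

section \<open>Counting functions between finite sets\<close>

lemma card_PiE_split:
  fixes Q R :: "'a set \<Rightarrow> ('a \<Rightarrow> 'b) \<Rightarrow> bool"
  assumes "finite S" "finite B" "finite C" "B \<inter> C = {}"
  shows "card {f \<in> S \<rightarrow>\<^sub>E B \<union> C.
            Q {j \<in> S. f j \<in> B} (restrict f {j \<in> S. f j \<in> B})
          \<and> R {j \<in> S. f j \<in> B} (restrict f (S - {j \<in> S. f j \<in> B}))}
       = (\<Sum>T\<in>Pow S. card {g \<in> T \<rightarrow>\<^sub>E B. Q T g} * card {h \<in> S - T \<rightarrow>\<^sub>E C. R T h})"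
    (is "card ?F = _")
proof -
  let ?parts = "SIGMA T:Pow S. {g \<in> T \<rightarrow>\<^sub>E B. Q T g} \<times> {h \<in> S - T \<rightarrow>\<^sub>E C. R T h}"
  define split :: "('a \<Rightarrow> 'b) \<Rightarrow> 'a set \<times> ('a \<Rightarrow> 'b) \<times> ('a \<Rightarrow> 'b)"
    where "split f = ({j \<in> S. f j \<in> B}, restrict f {j \<in> S. f j \<in> B},
      restrict f (S - {j \<in> S. f j \<in> B}))" for f
  define merge :: "'a set \<times> ('a \<Rightarrow> 'b) \<times> ('a \<Rightarrow> 'b) \<Rightarrow> 'a \<Rightarrow> 'b"
    where "merge = (\<lambda>(T, g, h) j. if j \<in> T then g j else h j)"
  have merge_in: "merge (T, g, h) \<in> S \<rightarrow>\<^sub>E B \<union> C"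
    and merge_B: "{j \<in> S. merge (T, g, h) j \<in> B} = T"
    and merge_restrict: "restrict (merge (T, g, h)) T = g" "restrict (merge (T, g, h)) (S - T) = h"
    if "T \<subseteq> S" "g \<in> T \<rightarrow>\<^sub>E B" "h \<in> S - T \<rightarrow>\<^sub>E C" for T g h
    using that assms(4) by (auto simp: merge_def PiE_iff extensional_def)
  have "bij_betw split ?F ?parts"
  proof (rule bij_betw_byWitness[where f' = merge])
    show "\<forall>f\<in>?F. merge (split f) = f"
      by (auto simp: split_def merge_def PiE_iff extensional_def)
    show "\<forall>x\<in>?parts. split (merge x) = x"
      by (auto simp: split_def merge_B merge_restrict)
    show "split ` ?F \<subseteq> ?parts"
      by (auto simp: split_def PiE_iff split: if_splits)
    show "merge ` ?parts \<subseteq> ?F"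
    proof (rule image_subsetI)
      fix x assume "x \<in> ?parts"
      then obtain T g h where "x = (T, g, h)" "T \<subseteq> S" "g \<in> T \<rightarrow>\<^sub>E B" "Q T g"
        "h \<in> S - T \<rightarrow>\<^sub>E C" "R T h"
        by blast
      then show "merge x \<in> ?F"
        by (simp add: merge_in merge_B merge_restrict)
    qed
  qed
  moreover have "finite ({g \<in> T \<rightarrow>\<^sub>E B. Q T g} \<times> {h \<in> S - T \<rightarrow>\<^sub>E C. R T h})"
    if "T \<in> Pow S" for T
    using that assms by (simp add: finite_subset finite_PiE)
  ultimately show ?thesis
    using assms by (simp add: bij_betw_same_card card_cartesian_product)
qed

lemma card_PiE_compose_bij:
  assumes "bij_betw \<phi> A B"
  shows "card {f \<in> I \<rightarrow>\<^sub>E A. P (restrict (\<phi> \<circ> f) I)} = card {g \<in> I \<rightarrow>\<^sub>E B. P g}"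
proof -
  have inverse: "restrict (\<phi> \<circ> restrict (inv_into A \<phi> \<circ> g) I) I = g" if "g \<in> I \<rightarrow>\<^sub>E B" for g
    using that assms by (auto simp: bij_betw_def PiE_iff extensional_def fun_eq_iff f_inv_into_f)
  have "bij_betw (\<lambda>f. restrict (\<phi> \<circ> f) I)
    {f \<in> I \<rightarrow>\<^sub>E A. P (restrict (\<phi> \<circ> f) I)} {g \<in> I \<rightarrow>\<^sub>E B. P g}"
  proof (rule bij_betw_byWitness[where f' = "\<lambda>g. restrict (inv_into A \<phi> \<circ> g) I"])
    show "(\<lambda>g. restrict (inv_into A \<phi> \<circ> g) I) ` {g \<in> I \<rightarrow>\<^sub>E B. P g}
      \<subseteq> {f \<in> I \<rightarrow>\<^sub>E A. P (restrict (\<phi> \<circ> f) I)}"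
      using assms inverse by (auto simp: bij_betw_def PiE_iff inv_into_into)
  qed (use assms inverse in \<open>auto simp: bij_betw_def PiE_iff extensional_def fun_eq_iff\<close>)
  then show ?thesis
    by (rule bij_betw_same_card)
qed

lemma bij_betw_diff_atLeastAtMost: "bij_betw (\<lambda>x. m - x) {1..m} {..<m::nat}"
  by (rule bij_betw_byWitness[where f' = "\<lambda>x. m - x"]) (auto simp: image_subset_iff)

lemma sum_Pow_card:
  fixes g :: "nat \<Rightarrow> 'a::comm_semiring_1"
  assumes "finite S"
  shows "(\<Sum>T\<in>Pow S. g (card T)) = (\<Sum>m\<le>card S. of_nat (card S choose m) * g m)"
proof -
  have "(\<Sum>T\<in>Pow S. g (card T)) = (\<Sum>m\<le>card S. \<Sum>T\<in>{T \<in> Pow S. card T = m}. g (card T))"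
    by (rule sum.group[symmetric]) (use assms in \<open>auto simp: card_mono\<close>)
  also have "\<dots> = (\<Sum>m\<le>card S. of_nat (card S choose m) * g m)"
  proof (rule sum.cong[OF refl])
    fix m
    have "card {T \<in> Pow S. card T = m} = card S choose m"
      using n_subsets[OF assms, of m] by (simp add: Pow_def)
    then show "(\<Sum>T\<in>{T \<in> Pow S. card T = m}. g (card T)) = of_nat (card S choose m) * g m"
      by simp
  qed
  finally show ?thesis .
qed

lemma binomial_ring_weighted:
  fixes x y :: "'a::comm_semiring_1"
  shows "(\<Sum>m\<le>n. of_nat m * of_nat (n choose m) * x ^ m * y ^ (n - m))
    = of_nat n * x * (x + y) ^ (n - 1)"
proof (cases n)
  case (Suc n')
  have "(\<Sum>m\<le>Suc n'. of_nat m * of_nat (Suc n' choose m) * x ^ m * y ^ (Suc n' - m))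
      = (\<Sum>j\<le>n'. of_nat (Suc j) * of_nat (Suc n' choose Suc j) * x ^ Suc j * y ^ (n' - j))"
    by (subst sum.atMost_Suc_shift) (simp del: binomial_Suc_Suc of_nat_Suc)
  also have "\<dots> = (\<Sum>j\<le>n'. of_nat (Suc n') * x * (of_nat (n' choose j) * x ^ j * y ^ (n' - j)))"
  proof (rule sum.cong[OF refl])
    fix j
    have "of_nat (Suc j) * of_nat (Suc n' choose Suc j) = (of_nat (Suc n') * of_nat (n' choose j) :: 'a)"
      by (metis Suc_times_binomial of_nat_mult)
    then show "of_nat (Suc j) * of_nat (Suc n' choose Suc j) * x ^ Suc j * y ^ (n' - j)
      = of_nat (Suc n') * x * (of_nat (n' choose j) * x ^ j * y ^ (n' - j))"
      by (metis (no_types, lifting) mult.assoc mult.left_commute power_Suc)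
  qed
  also have "\<dots> = of_nat (Suc n') * x * (x + y) ^ n'"
    by (simp add: binomial_ring sum_distrib_left)
  finally show ?thesis
    using Suc by simp
qed simp

section \<open>Shifted parking functions\<close>

(* The codomain bound is no restriction for S \<noteq> {}: the condition for i = card S - 1 already
  forces all values below a + card S. *)
definition parking_functions :: "nat \<Rightarrow> 'a set \<Rightarrow> ('a \<Rightarrow> nat) set" where
  "parking_functions a S =
    {f \<in> S \<rightarrow>\<^sub>E {..a + card S}. \<forall>i < card S. i < card {j \<in> S. f j \<le> a + i}}"

lemma parking_condition_split:
  fixes f :: "'a \<Rightarrow> nat"
  assumes "finite S" "S \<noteq> {}" and T: "T = {j \<in> S. f j \<le> a}"
  shows "(\<forall>i < card S. i < card {j \<in> S. f j \<le> a + i})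
    \<longleftrightarrow> T \<noteq> {} \<and> (\<forall>i < card (S - T). i < card {j \<in> S - T. f j \<le> a + card T + i})"
proof -
  have "finite T" "card (S - T) = card S - card T"
    using assms by (auto simp: card_Diff_subset)
  have split_count: "card {j \<in> S. f j \<le> a + i} = card T + card {j \<in> S - T. f j \<le> a + i}" for i
  proof -
    have "{j \<in> S. f j \<le> a + i} = T \<union> {j \<in> S - T. f j \<le> a + i}"
      using T by auto
    moreover have "card (T \<union> {j \<in> S - T. f j \<le> a + i}) = card T + card {j \<in> S - T. f j \<le> a + i}"
      using \<open>finite S\<close> \<open>finite T\<close> by (intro card_Un_disjoint) auto
    ultimately show ?thesis
      by simp
  qed
  show ?thesis
    unfolding \<open>card (S - T) = _\<close>
  proof (intro iffI conjI allI impI)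
    assume parking: "\<forall>i < card S. i < card {j \<in> S. f j \<le> a + i}"
    show "T \<noteq> {}"
      using parking[rule_format, of 0] assms by (auto simp: card_gt_0_iff)
    show "i < card {j \<in> S - T. f j \<le> a + card T + i}" if "i < card S - card T" for i
      using parking[rule_format, of "card T + i"] that split_count[of "card T + i"]
      by (simp add: add.assoc)
  next
    fix i assume "i < card S"
      and rest: "T \<noteq> {} \<and> (\<forall>i < card S - card T. i < card {j \<in> S - T. f j \<le> a + card T + i})"
    show "i < card {j \<in> S. f j \<le> a + i}"
    proof (cases "i < card T")
      case False
      then have "i - card T < card S - card T"
        using \<open>i < card S\<close> by (simp add: diff_less_mono)
      then have "i - card T < card {j \<in> S - T. f j \<le> a + card T + (i - card T)}"
        using rest by blast
      then show ?thesis
        using False split_count[of i] by simp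
    qed (simp add: split_count)
  qed
qed

lemma card_parking_functions_translate:
  "card {h \<in> I \<rightarrow>\<^sub>E {c<..c + Suc b + card I}. \<forall>i < card I. i < card {j \<in> I. h j \<le> c + Suc b + i}}
    = card (parking_functions b I)"
proof -
  have "bij_betw (\<lambda>x. x - Suc c) {c<..c + Suc b + card I} {..b + card I}"
    by (intro bij_betw_byWitness[where f' = "\<lambda>y. y + Suc c"]) auto
  note translate = card_PiE_compose_bij[OF this, where I = I
    and P = "\<lambda>g. \<forall>i < card I. i < card {j \<in> I. g j \<le> b + i}"]
  have "{j \<in> I. h j \<le> c + Suc b + i} = {j \<in> I. restrict ((\<lambda>x. x - Suc c) \<circ> h) I j \<le> b + i}"
    if "h \<in> I \<rightarrow>\<^sub>E {c<..c + Suc b + card I}" for h i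
    using that by (force simp: PiE_iff)
  then show ?thesis
    unfolding parking_functions_def translate[symmetric]
    by (intro arg_cong[where f = card] Collect_cong conj_cong refl) simp
qed

(* Condition on the nonempty set T of cars preferring one of the first a + 1 spots; the other cars,
  moved down by a + 1, form a (card T - 1)-shifted parking function. *)
lemma card_parking_functions_rec:
  assumes "finite S" "S \<noteq> {}"
  shows "card (parking_functions a S) = (\<Sum>T\<in>Pow S.
    if T = {} then 0 else (a + 1) ^ card T * card (parking_functions (card T - 1) (S - T)))"
proof -
  define R where "R T h \<longleftrightarrow> (\<forall>i < card (S - T). i < card {j \<in> S - T. h j \<le> a + card T + i})"
    for T and h :: "'a \<Rightarrow> nat"
  have "{..a + card S} = {..a} \<union> {a<..a + card S}"
    by auto
  moreover have "(\<forall>i < card S. i < card {j \<in> S. f j \<le> a + i})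
    \<longleftrightarrow> {j \<in> S. f j \<in> {..a}} \<noteq> {}
      \<and> R {j \<in> S. f j \<in> {..a}} (restrict f (S - {j \<in> S. f j \<in> {..a}}))" for f
  proof -
    have "{j \<in> S - T. restrict f (S - T) j \<le> c} = {j \<in> S - T. f j \<le> c}" for T c
      by auto
    then have "R T (restrict f (S - T)) \<longleftrightarrow> R T f" for T
      unfolding R_def by (simp only:)
    then show ?thesis
      unfolding R_def by (simp only: atMost_iff parking_condition_split[OF assms refl])
  qed
  ultimately have split: "parking_functions a S = {f \<in> S \<rightarrow>\<^sub>E {..a} \<union> {a<..a + card S}.
      {j \<in> S. f j \<in> {..a}} \<noteq> {} \<and> R {j \<in> S. f j \<in> {..a}} (restrict f (S - {j \<in> S. f j \<in> {..a}}))}"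
    unfolding parking_functions_def by simp
  have "card (parking_functions a S) = (\<Sum>T\<in>Pow S.
      card {g \<in> T \<rightarrow>\<^sub>E {..a}. T \<noteq> {}} * card {h \<in> S - T \<rightarrow>\<^sub>E {a<..a + card S}. R T h})"
    unfolding split by (rule card_PiE_split[where Q = "\<lambda>T g. T \<noteq> {}"]) (use assms(1) in auto)
  also have "\<dots> = (\<Sum>T\<in>Pow S.
      if T = {} then 0 else (a + 1) ^ card T * card (parking_functions (card T - 1) (S - T)))"
  proof (rule sum.cong[OF refl])
    fix T assume "T \<in> Pow S"
    show "card {g \<in> T \<rightarrow>\<^sub>E {..a}. T \<noteq> {}} * card {h \<in> S - T \<rightarrow>\<^sub>E {a<..a + card S}. R T h}
      = (if T = {} then 0 else (a + 1) ^ card T * card (parking_functions (card T - 1) (S - T)))"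
    proof (cases "T = {}")
      case False
      have "finite T"
        using \<open>T \<in> Pow S\<close> assms(1) finite_subset by auto
      then have "card T = Suc (card T - 1)" "card S = card T + card (S - T)"
        using False \<open>T \<in> Pow S\<close> assms(1) by (auto simp: card_Diff_subset card_mono card_gt_0_iff)
      then have "card {h \<in> S - T \<rightarrow>\<^sub>E {a<..a + card S}. R T h} = card (parking_functions (card T - 1) (S - T))"
        unfolding R_def using card_parking_functions_translate[where c = a and b = "card T - 1" and I = "S - T"]
        by (simp add: add.assoc)
      then show ?thesis
        using False \<open>finite T\<close> by (simp add: card_PiE)
    qed simp
  qed
  finally show ?thesis .
qed

definition parking_count :: "nat \<Rightarrow> nat \<Rightarrow> nat" where
  "parking_count a n = (if n = 0 then 1 else (a + 1) * (a + n + 1) ^ (n - 1))"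

lemma parking_count_complement:
  assumes "1 \<le> m" and "m \<le> n"
  shows "n * parking_count (m - 1) (n - m) = m * n ^ (n - m)"
proof (cases "m = n")
  case False
  define r where "r = n - m - 1"
  then have "n - m = Suc r" "m - 1 + 1 = m" "m - 1 + Suc r + 1 = n"
    using assms False by auto
  then show ?thesis
    unfolding parking_count_def by (simp only:) (simp add: ac_simps)
qed (simp add: parking_count_def)

lemma of_nat_parking_count:
  "real (parking_count a n) = real (a + 1) * real (a + n + 1) powi (int n - 1)"
  unfolding parking_count_def
  by (cases n) (simp_all add: power_int_minus1_right power_int_of_nat field_simps)

lemma card_parking_functions:
  assumes "finite S"
  shows "card (parking_functions a S) = parking_count a (card S)"
  using assms
proof (induction "card S" arbitrary: a S rule: less_induct)
  case less
  show ?case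
  proof (cases "S = {}")
    case True
    then show ?thesis
      by (simp add: parking_functions_def parking_count_def)
  next
    case False
    define k where "k = card S"
    have "k \<noteq> 0"
      using less.prems False unfolding k_def by simp
    have "k * card (parking_functions a S)
        = (\<Sum>T\<in>Pow S. card T * (a + 1) ^ card T * k ^ (k - card T))"
      unfolding card_parking_functions_rec[OF less.prems False] sum_distrib_left
    proof (intro sum.cong refl)
      fix T assume "T \<in> Pow S"
      show "k * (if T = {} then 0 else (a + 1) ^ card T * card (parking_functions (card T - 1) (S - T)))
        = card T * (a + 1) ^ card T * k ^ (k - card T)"
      proof (cases "T = {}")
        case False
        with \<open>T \<in> Pow S\<close> less.prems have "1 \<le> card T" "card T \<le> k" "card (S - T) = k - card T"
          unfolding k_def by (auto simp: Suc_le_eq card_gt_0_iff card_mono card_Diff_subset finite_subset)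
        then have "k * card (parking_functions (card T - 1) (S - T)) = card T * k ^ (k - card T)"
          using less.hyps[of "S - T" "card T - 1"] less.prems parking_count_complement
          unfolding k_def by simp
        then show ?thesis
          using False by (simp add: mult.left_commute)
      qed simp
    qed
    also have "\<dots> = (\<Sum>m\<le>k. m * (k choose m) * (a + 1) ^ m * k ^ (k - m))"
      using sum_Pow_card[OF less.prems, where g = "\<lambda>m. m * (a + 1) ^ m * k ^ (k - m)"]
      unfolding k_def by (simp add: ac_simps)
    also have "\<dots> = k * parking_count a k"
      using binomial_ring_weighted[of k "a + 1" k] \<open>k \<noteq> 0\<close>
      by (simp add: parking_count_def algebra_simps)
    finally show ?thesis
      using \<open>k \<noteq> 0\<close> unfolding k_def by simp
  qed
qed

section \<open>Avalanches in terms of depths\<close>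

(* For the depths d j = M - E j this is the avalanche size of T_l(E), see avalanche_Tmap. *)
definition avalanche_depths :: "nat \<Rightarrow> 'a set \<Rightarrow> ('a \<Rightarrow> nat) \<Rightarrow> nat" where
  "avalanche_depths l S d = (LEAST i. card {j \<in> S. d j \<le> l + i} \<le> i)"

lemma avalanche_depths_restrict [simp]:
  "avalanche_depths l S (restrict d S) = avalanche_depths l S d"
proof -
  have "{j \<in> S. restrict d S j \<le> c} = {j \<in> S. d j \<le> c}" for c
    by auto
  then show ?thesis
    unfolding avalanche_depths_def by simp
qed

lemma avalanche_depths_Suc:
  "avalanche_depths (Suc l) S (\<lambda>j. Suc (d j)) = avalanche_depths l S d"
  by (simp add: avalanche_depths_def)

lemma avalanche_depths_eq_iff:
  assumes "finite S"
  shows "avalanche_depths l S d = k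
    \<longleftrightarrow> card {j \<in> S. d j \<le> l + k} = k \<and> (\<forall>i < k. i < card {j \<in> S. d j \<le> l + i})"
proof -
  define G where "G i = card {j \<in> S. d j \<le> l + i}" for i
  have "G (card S) \<le> card S"
    unfolding G_def using assms by (intro card_mono) auto
  have G_mono: "G i \<le> G k" if "i \<le> k" for i
    unfolding G_def using assms that by (intro card_mono) auto
  show ?thesis
    unfolding avalanche_depths_def G_def[symmetric]
  proof
    assume least: "(LEAST i. G i \<le> i) = k"
    then have "G k \<le> k"
      using LeastI[of "\<lambda>i. G i \<le> i", OF \<open>G (card S) \<le> card S\<close>] by simp
    moreover have below: "\<forall>i < k. i < G i"
      using least not_less_Least[of _ "\<lambda>i. G i \<le> i"] by (auto simp: not_le)
    moreover have "k \<le> G k"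
    proof (cases k)
      case (Suc k')
      then show ?thesis
        using below[rule_format, of k'] G_mono[of k'] by simp
    qed simp
    ultimately show "G k = k \<and> (\<forall>i < k. i < G i)"
      by simp
  next
    assume "G k = k \<and> (\<forall>i < k. i < G i)"
    then show "(LEAST i. G i \<le> i) = k"
      by (intro Least_equality) (auto simp: not_le[symmetric])
  qed
qed

lemma avalanche_depths_eq_iff_parking:
  assumes "finite S"
  shows "avalanche_depths l S d = k \<longleftrightarrow> card {j \<in> S. d j \<le> l + k} = k
    \<and> restrict d {j \<in> S. d j \<le> l + k} \<in> parking_functions l {j \<in> S. d j \<le> l + k}"
proof -
  define T where "T = {j \<in> S. d j \<le> l + k}"
  have "{j \<in> T. restrict d T j \<le> l + i} = {j \<in> S. d j \<le> l + i}" if "i < k" for i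
    using that unfolding T_def by auto
  moreover have "restrict d T \<in> T \<rightarrow>\<^sub>E {..l + k}"
    unfolding T_def by auto
  ultimately show ?thesis
    unfolding avalanche_depths_eq_iff[OF assms] T_def[symmetric] parking_functions_def
    by (auto simp del: restrict_apply)
qed

lemma card_avalanche_depths:
  assumes "finite S" and "l + k < U"
  shows "card {d \<in> S \<rightarrow>\<^sub>E {..<U}. avalanche_depths l S d = k}
    = (card S choose k) * parking_count l k * (U - l - k - 1) ^ (card S - k)"
proof -
  let ?c = "parking_count l k"
  define Q where "Q T g \<longleftrightarrow> card T = k \<and> g \<in> parking_functions l T" for T and g :: "'a \<Rightarrow> nat"
  have "{..<U} = {..l + k} \<union> {l + k<..<U}"
    using assms(2) by auto
  moreover have "avalanche_depths l S d = k \<longleftrightarrow>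
      Q {j \<in> S. d j \<in> {..l + k}} (restrict d {j \<in> S. d j \<in> {..l + k}})" for d
    unfolding avalanche_depths_eq_iff_parking[OF assms(1)] Q_def by simp
  ultimately have "card {d \<in> S \<rightarrow>\<^sub>E {..<U}. avalanche_depths l S d = k}
      = (\<Sum>T\<in>Pow S. card {g \<in> T \<rightarrow>\<^sub>E {..l + k}. Q T g} * card (S - T \<rightarrow>\<^sub>E {l + k<..<U}))"
    using card_PiE_split[OF assms(1), of "{..l + k}" "{l + k<..<U}" Q "\<lambda>_ _. True"]
    by (simp add: disjoint_iff)
  also have "\<dots> = (\<Sum>T\<in>Pow S. if card T = k then ?c * (U - l - k - 1) ^ (card S - card T) else 0)"
  proof (rule sum.cong[OF refl])
    fix T assume "T \<in> Pow S"
    then have "finite T" "card (S - T) = card S - card T"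
      using assms(1) by (auto simp: finite_subset card_Diff_subset)
    moreover have "card {g \<in> T \<rightarrow>\<^sub>E {..l + k}. Q T g} = (if card T = k then ?c else 0)"
    proof (cases "card T = k")
      case True
      then have "{g \<in> T \<rightarrow>\<^sub>E {..l + k}. Q T g} = parking_functions l T"
        unfolding Q_def parking_functions_def by auto
      then show ?thesis
        using True card_parking_functions[OF \<open>finite T\<close>, of l] by simp
    qed (simp add: Q_def)
    ultimately show "card {g \<in> T \<rightarrow>\<^sub>E {..l + k}. Q T g} * card (S - T \<rightarrow>\<^sub>E {l + k<..<U})
        = (if card T = k then ?c * (U - l - k - 1) ^ (card S - card T) else 0)"
      using assms(1) by (simp add: card_funcsetE)
  qed
  also have "\<dots> = (\<Sum>m\<le>card S. (card S choose m) * (if m = k then ?c * (U - l - k - 1) ^ (card S - m) else 0))"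
    using sum_Pow_card[OF assms(1), where g = "\<lambda>m. if m = k then ?c * (U - l - k - 1) ^ (card S - m) else 0"]
    by simp
  also have "\<dots> = (card S choose k) * ?c * (U - l - k - 1) ^ (card S - k)"
    by (simp add: if_distrib[of "(*) _"] cong: if_cong)
  finally show ?thesis .
qed

section \<open>The BB space\<close>

lemma sum_Ycount:
  assumes "finite V"
  shows "(\<Sum>v\<in>V. Ycount N E v) = card {j \<in> {1..N}. E j \<in> V}"
proof -
  have "{j \<in> {1..N}. E j \<in> V} = (\<Union>v\<in>V. {j \<in> {1..N}. E j = v})"
    by auto
  also have "card \<dots> = (\<Sum>v\<in>V. card {j \<in> {1..N}. E j = v})"
    by (rule card_UN_disjoint) (use assms in auto)
  finally show ?thesis
    unfolding Ycount_def by simp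
qed

lemma avalanche_Tmap:
  assumes "E \<in> configs N M"
  shows "avalanche N M (Tmap N M l E) = avalanche_depths l {1..N} (\<lambda>j. M - E j)"
proof -
  have "{j \<in> {1..N}. Tmap N M l E j \<in> {M - i..M}} = {j \<in> {1..N}. M - E j \<le> l + i}" for i
    using assms unfolding configs_def Tmap_def by (auto simp: PiE_iff)
  then show ?thesis
    unfolding avalanche_def avalanche_depths_def by (simp add: sum_Ycount)
qed

lemma card_avalanche_Tmap:
  assumes "k + l < M"
  shows "card {E \<in> configs N M. avalanche N M (Tmap N M l E) = k}
    = (N choose k) * parking_count l k * (M - l - k - 1) ^ (N - k)"
proof -
  have "avalanche N M (Tmap N M l E) = avalanche_depths l {1..N} (restrict ((\<lambda>x. M - x) \<circ> E) {1..N})"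
    if "E \<in> configs N M" for E
    using avalanche_Tmap[OF that] by (simp add: comp_def)
  then have "card {E \<in> configs N M. avalanche N M (Tmap N M l E) = k} = card {E \<in> {1..N} \<rightarrow>\<^sub>E {1..M}.
      avalanche_depths l {1..N} (restrict ((\<lambda>x. M - x) \<circ> E) {1..N}) = k}"
    unfolding configs_def by (intro arg_cong[where f = card] Collect_cong conj_cong refl) simp
  also have "\<dots> = card {d \<in> {1..N} \<rightarrow>\<^sub>E {..<M}. avalanche_depths l {1..N} d = k}"
    by (rule card_PiE_compose_bij[OF bij_betw_diff_atLeastAtMost])
  also have "\<dots> = (N choose k) * parking_count l k * (M - l - k - 1) ^ (N - k)"
    using card_avalanche_depths[of "{1..N}" l k M] assms by simp
  finally show ?thesis .
qed

lemma configs_top_empty: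
  "{E \<in> configs N M. Ycount N E M = 0} = {1..N} \<rightarrow>\<^sub>E {1..M - 1}"
proof -
  have "Ycount N E M = 0 \<longleftrightarrow> (\<forall>j \<in> {1..N}. E j \<noteq> M)" for E
    unfolding Ycount_def by auto
  moreover have "{1..M - 1} = {1..M} - {M}"
    by auto
  ultimately show ?thesis
    unfolding configs_def by (auto simp: PiE_iff extensional_def)
qed

lemma avalanche_Tmap_top_empty:
  assumes "E \<in> {1..N} \<rightarrow>\<^sub>E {1..M - 1}"
  shows "avalanche N M (Tmap N M l E) = avalanche_depths l {1..N} (\<lambda>j. Suc (M - 1 - E j))"
proof -
  have "restrict (\<lambda>j. M - E j) {1..N} = restrict (\<lambda>j. Suc (M - 1 - E j)) {1..N}"
  proof (rule restrict_ext)
    fix j assume "j \<in> {1..N}"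
    then have "1 \<le> E j" "E j \<le> M - 1"
      using assms by (auto simp: PiE_iff)
    then show "M - E j = Suc (M - 1 - E j)"
      by simp
  qed
  moreover have "E \<in> configs N M"
    using assms configs_top_empty by blast
  ultimately show ?thesis
    by (metis avalanche_Tmap avalanche_depths_restrict)
qed

lemma card_avalanche_Tmap_top_empty:
  assumes "k + l < M"
  shows "card {E \<in> configs N M. avalanche N M (Tmap N M l E) = k \<and> Ycount N E M = 0}
    = (N choose k) * (if k = 0 then 1 else l * (l + k) ^ (k - 1)) * (M - l - k - 1) ^ (N - k)"
proof -
  have "{E \<in> configs N M. avalanche N M (Tmap N M l E) = k \<and> Ycount N E M = 0}
      = {E \<in> {E \<in> configs N M. Ycount N E M = 0}. avalanche N M (Tmap N M l E) = k}"
    by blast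
  also have "\<dots> = {E \<in> {1..N} \<rightarrow>\<^sub>E {1..M - 1}. avalanche_depths l {1..N} (\<lambda>j. Suc (M - 1 - E j)) = k}"
    unfolding configs_top_empty using avalanche_Tmap_top_empty
    by (intro Collect_cong conj_cong refl) simp
  finally have "card {E \<in> configs N M. avalanche N M (Tmap N M l E) = k \<and> Ycount N E M = 0}
      = card {E \<in> {1..N} \<rightarrow>\<^sub>E {1..M - 1}. avalanche_depths l {1..N} (\<lambda>j. Suc (M - 1 - E j)) = k}"
    by (rule arg_cong)
  also have "\<dots> = (N choose k) * (if k = 0 then 1 else l * (l + k) ^ (k - 1)) * (M - l - k - 1) ^ (N - k)"
  proof (cases l)
    case 0
    then have "avalanche_depths l {1..N} (\<lambda>j. Suc (d j)) = 0" for d :: "nat \<Rightarrow> nat"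
      unfolding avalanche_depths_def by (intro Least_equality) auto
    then show ?thesis
      using \<open>l = 0\<close> by (simp add: card_funcsetE)
  next
    case (Suc l')
    have "card {E \<in> {1..N} \<rightarrow>\<^sub>E {1..M - 1}. avalanche_depths l {1..N} (\<lambda>j. Suc (M - 1 - E j)) = k}
        = card {E \<in> {1..N} \<rightarrow>\<^sub>E {1..M - 1}.
            avalanche_depths l' {1..N} (restrict ((\<lambda>x. M - 1 - x) \<circ> E) {1..N}) = k}"
      unfolding Suc avalanche_depths_Suc by (simp add: comp_def)
    also have "\<dots> = card {d \<in> {1..N} \<rightarrow>\<^sub>E {..<M - 1}. avalanche_depths l' {1..N} d = k}"
      by (rule card_PiE_compose_bij[OF bij_betw_diff_atLeastAtMost])
    also have "\<dots> = (N choose k) * (if k = 0 then 1 else l * (l + k) ^ (k - 1)) * (M - l - k - 1) ^ (N - k)"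
      using card_avalanche_depths[of "{1..N}" l' k "M - 1"] assms Suc by (simp add: parking_count_def)
    finally show ?thesis .
  qed
  finally show ?thesis .
qed

lemma prob_Punif:
  assumes "0 < M"
  shows "measure_pmf.prob (Punif N M) A = real (card (configs N M \<inter> A)) / real M ^ N"
proof -
  have "finite (configs N M)" "configs N M \<noteq> {}" "card (configs N M) = M ^ N"
    unfolding configs_def using assms by (auto simp: finite_PiE PiE_eq_empty_iff card_funcsetE)
  then show ?thesis
    unfolding Punif_def by (simp add: measure_pmf_of_set)
qed

lemma prob_Plam_avalanche:
  assumes "k + l < M"
  shows "measure_pmf.prob (Plam N M l) {E. avalanche N M E = k}
    = real ((N choose k) * parking_count l k * (M - l - k - 1) ^ (N - k)) / real M ^ N"
proof -
  have "configs N M \<inter> Tmap N M l -` {E. avalanche N M E = k}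
      = {E \<in> configs N M. avalanche N M (Tmap N M l E) = k}"
    by auto
  then show ?thesis
    using assms unfolding Plam_def measure_map_pmf
    by (simp only: prob_Punif card_avalanche_Tmap)
qed

lemma prob_avalanche_Tmap_top_empty:
  assumes "k + l < M"
  shows "measure_pmf.prob (Punif N M) {E. avalanche N M (Tmap N M l E) = k \<and> Ycount N E M = 0}
    = real ((N choose k) * (if k = 0 then 1 else l * (l + k) ^ (k - 1)) * (M - l - k - 1) ^ (N - k))
      / real M ^ N"
proof -
  have "configs N M \<inter> {E. avalanche N M (Tmap N M l E) = k \<and> Ycount N E M = 0}
      = {E \<in> configs N M. avalanche N M (Tmap N M l E) = k \<and> Ycount N E M = 0}"
    by auto
  then show ?thesis
    using assms by (simp only: prob_Punif card_avalanche_Tmap_top_empty)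
qed

lemma choose_times_power_div:
  fixes p :: real
  assumes "0 < M" and "p = 1 / real M" and "s \<le> M"
  shows "real (N choose k) * real ((M - s) ^ (N - k)) / real M ^ N
    = real (N choose k) * p ^ k * (1 - real s * p) ^ (N - k)"
proof (cases "k \<le> N")
  case True
  then have "real M ^ N = real M ^ k * real M ^ (N - k)"
    by (simp flip: power_add)
  moreover have "real (M - s) = real M * (1 - real s * p)"
    using assms True by (simp add: of_nat_diff field_simps)
  ultimately show ?thesis
    using True assms(1) by (simp add: assms(2) power_mult_distrib power_divide)
next
  case False
  then show ?thesis
    by (simp add: binomial_eq_0)
qed

theorem mainTheorem1:
  fixes N M k l :: nat and p :: real
  assumes "0 < N" and "N < M" and "p = 1 / real M" and "k + l + 1 < M"
  shows "(measure_pmf.prob (Plam N M l) {E. avalanche N M E = k}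
           = real (l + 1) * real (N choose k) * p ^ k
             * (1 - real (k + 1 + l) * p) ^ (N - k) * real (k + 1 + l) powi (int k - 1))
    \<and> (measure_pmf.prob (Punif N M) {E. avalanche N M (Tmap N M l E) = k \<and> Ycount N E M = 0}
           = (if k = 0 then 1 else real l * real (k + l) powi (int k - 1))
             * real (N choose k) * p ^ k * (1 - real (k + 1 + l) * p) ^ (N - k))"
proof -
  have "0 < M" and kl: "k + l < M" and "M - l - k - 1 = M - (k + 1 + l)"
    using assms by auto
  define w where "w = real (N choose k) * p ^ k * (1 - real (k + 1 + l) * p) ^ (N - k)"
  have weight: "real ((N choose k) * c * (M - l - k - 1) ^ (N - k)) / real M ^ N = real c * w" for c
    using choose_times_power_div[OF \<open>0 < M\<close> assms(3), of "k + 1 + l" N k] kl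
    unfolding w_def \<open>M - l - k - 1 = _\<close> by (simp add: field_simps)
  have "real (if k = 0 then 1 else l * (l + k) ^ (k - 1))
      = (if k = 0 then 1 else real l * real (k + l) powi (int k - 1))"
    by (cases k) (simp_all add: power_int_of_nat ac_simps)
  then show ?thesis
    unfolding prob_Plam_avalanche[OF kl] prob_avalanche_Tmap_top_empty[OF kl] weight
      of_nat_parking_count w_def
    by (simp add: ac_simps)
qed

end
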